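(* Let $K_{\Delta p},K_{\Delta v},\lambda_1,\lambda_2,\gamma_{\Delta p},\gamma_{\Delta v}>0$ and $a,b\ge0$. For each $N\in\mathbb{N}$ consider states $\tilde\chi_i=(x_{1,i},x_{2,i},x_{3,i},x_{4,i})\in\mathbb{R}^4$, $i=0,\dots,N$, with $g_i:=a\psi^{i-1}_{\Delta p}+b\psi^{i-1}_{\Delta v}$ and dynamics $$\begin{aligned}\dot x_{1,i}&=x_{2,i},\\ \dot x_{2,i}&=-(x_{1,i}+x_{3,i})-K_{\Delta v}\big(x_{2,i}-\lambda_1x_{3,i}+x_{4,i}+K_{\Delta p}(x_{1,i}+x_{3,i})\big)+(K_{\Delta p}-\lambda_1)(\lambda_1x_{3,i}-x_{4,i})+\lambda_2x_{4,i}-K_{\Delta p}x_{2,i}-g_i,\\ \dot x_{3,i}&=-\lambda_1x_{3,i}+x_{4,i},\\ \dot x_{4,i}&=-\lambda_2x_{4,i}+g_i,\end{aligned}$$ where $\psi^{-1}_{\Delta p}=\psi^{-1}_{\Delta v}=0$ and, for $i\ge1$, with $m=i-1$, $$\psi^{m}_{\Delta p}=\gamma_{\Delta p}\,\mathrm{sign}\Big(\tfrac{1}{m+1}\textstyle\sum_{j=0}^{m}x_{1,j}\Big)\sqrt{\sigma^2_{1,m}},\qquad \psi^{m}_{\Delta v}=\gamma_{\Delta v}\,\mathrm{sign}\Big(\tfrac{1}{m+1}\textstyle\sum_{j=0}^{m}x_{2,j}\Big)\sqrt{\sigma^2_{2,m}},$$ $\sigma^2_{k,m}$ being the population variance of $x_{k,0},\dots,x_{k,m}$.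 (Here $x_{1,i}=\Delta p_i+\Delta\bar p$, $x_{2,i}=\Delta v_i$, $(x_{3,i},x_{4,i})=(\rho_{1,i},\rho_{2,i})$; this is the closed loop of the variable-spacing policy with reference distance $\Delta p^r_i=-\Delta\bar p-\rho_{1,i}$ and reference speed difference $\Delta v^r_i=\lambda_1\rho_{1,i}-\rho_{2,i}-K_{\Delta p}(\Delta p_i-\Delta p^r_i)$.) Assume solutions exist on $[0,\infty)$. Then: (1) the origin of each isolated subsystem (with $g_i$ replaced by $0$) is globally exponentially stable; (2) there exist $\beta^{vp}\in\mathcal{KL}$ and $\tilde\gamma^{vp}>0$ such that for every $N$, every solution, every $i$ and all $t\ge0$, $$|\tilde\chi_i(t)|\le\beta^{vp}(|\tilde\chi_i(0)|,t)+\tilde\gamma^{vp}\max_{j=0,\dots,i-1}\sup_{0\le\tau\le t}|\tilde\chi_j(\tau)|;$$ (3) there exist $a,b\ge0$ (not both zero) for which this holds with $\tilde\gamma^{vp}\in(0,1)$, and for such $a,b$ the origin of the interconnected system is Asymptotically String Stable.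
   Context: $|\cdot|$ is the Euclidean norm; $\mathrm{sign}$ takes values in $\{-1,0,1\}$. String Stability of the origin means: for every $\epsilon>0$ there exists $\delta>0$ such that for all $N\in\mathbb{N}$ and every solution, $\max_{i=0,\dots,N}|\tilde\chi_i(0)|<\delta$ implies $\max_{i=0,\dots,N}|\tilde\chi_i(t)|<\epsilon$ for all $t\ge0$. Asymptotic String Stability means String Stability together with: for all $N$, every solution satisfies $\lim_{t\to\infty}|\tilde\chi_i(t)|=0$ for all $i=0,\dots,N$. *)

theory Defs
  imports "HOL-Analysis.Analysis"
begin

text \<open>States live in real^4; the components x1,x2,x3,x4 are the coordinates
  indexed by 1,2,3,4 of the numeral type 4 (4 coincides with 0 there, but the
  four indices are pairwise distinct).\<close>

definition x1 :: "real^4 \<Rightarrow> real" where "x1 s = s $ 1"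
definition x2 :: "real^4 \<Rightarrow> real" where "x2 s = s $ 2"
definition x3 :: "real^4 \<Rightarrow> real" where "x3 s = s $ 3"
definition x4 :: "real^4 \<Rightarrow> real" where "x4 s = s $ 4"

definition vp_field :: "real \<Rightarrow> real \<Rightarrow> real \<Rightarrow> real \<Rightarrow> real^4 \<Rightarrow> real \<Rightarrow> real^4" where
  "vp_field Kp Kv l1 l2 s g = (\<chi> k.
     if k = 1 then x2 s
     else if k = 2 then
       - (x1 s + x3 s)
       - Kv * (x2 s - l1 * x3 s + x4 s + Kp * (x1 s + x3 s))
       + (Kp - l1) * (l1 * x3 s - x4 s) + l2 * x4 s - Kp * x2 s - g
     else if k = 3 then - l1 * x3 s + x4 s
     else - l2 * x4 s + g)"

definition smean :: "(nat \<Rightarrow> real) \<Rightarrow> nat \<Rightarrow> real" where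
  "smean f m = (\<Sum>j\<le>m. f j) / real (m + 1)"

definition pvar :: "(nat \<Rightarrow> real) \<Rightarrow> nat \<Rightarrow> real" where
  "pvar f m = (\<Sum>j\<le>m. (f j - smean f m)\<^sup>2) / real (m + 1)"

definition psi :: "real \<Rightarrow> (nat \<Rightarrow> real) \<Rightarrow> nat \<Rightarrow> real" where
  "psi \<gamma> f m = \<gamma> * sgn (smean f m) * sqrt (pvar f m)"

definition gin :: "real \<Rightarrow> real \<Rightarrow> real \<Rightarrow> real \<Rightarrow> (nat \<Rightarrow> real \<Rightarrow> real^4) \<Rightarrow> nat \<Rightarrow> real \<Rightarrow> real" where
  "gin a b \<gamma>p \<gamma>v \<chi>s i t =
     (if i = 0 then 0
      else a * psi \<gamma>p (\<lambda>j. x1 (\<chi>s j t)) (i - 1) + b * psi \<gamma>v (\<lambda>j. x2 (\<chi>s j t)) (i - 1))"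

definition vp_sol :: "real \<Rightarrow> real \<Rightarrow> real \<Rightarrow> real \<Rightarrow> real \<Rightarrow> real \<Rightarrow> real \<Rightarrow> real \<Rightarrow> nat
    \<Rightarrow> (nat \<Rightarrow> real \<Rightarrow> real^4) \<Rightarrow> bool" where
  "vp_sol Kp Kv l1 l2 \<gamma>p \<gamma>v a b N \<chi>s \<longleftrightarrow>
     (\<forall>i\<le>N. \<forall>t\<ge>0. (\<chi>s i has_vector_derivative
         vp_field Kp Kv l1 l2 (\<chi>s i t) (gin a b \<gamma>p \<gamma>v \<chi>s i t)) (at t within {0..}))"

definition iso_sol :: "real \<Rightarrow> real \<Rightarrow> real \<Rightarrow> real \<Rightarrow> (real \<Rightarrow> real^4) \<Rightarrow> bool" where
  "iso_sol Kp Kv l1 l2 x \<longleftrightarrow>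
     (\<forall>t\<ge>0. (x has_vector_derivative vp_field Kp Kv l1 l2 (x t) 0) (at t within {0..}))"

definition iso_GES :: "real \<Rightarrow> real \<Rightarrow> real \<Rightarrow> real \<Rightarrow> bool" where
  "iso_GES Kp Kv l1 l2 \<longleftrightarrow>
     (\<exists>M c. M > 0 \<and> c > 0 \<and>
        (\<forall>x. iso_sol Kp Kv l1 l2 x \<longrightarrow>
           (\<forall>t\<ge>0. norm (x t) \<le> M * norm (x 0) * exp (- c * t))))"

definition classK :: "(real \<Rightarrow> real) \<Rightarrow> bool" where
  "classK \<alpha> \<longleftrightarrow> continuous_on {0..} \<alpha> \<and> strict_mono_on {0..} \<alpha> \<and> \<alpha> 0 = 0"

definition classKL :: "(real \<Rightarrow> real \<Rightarrow> real) \<Rightarrow> bool" where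
  "classKL \<beta> \<longleftrightarrow>
     (\<forall>t\<ge>0. classK (\<lambda>r. \<beta> r t)) \<and>
     (\<forall>r\<ge>0. antimono_on {0..} (\<beta> r) \<and> ((\<beta> r) \<longlongrightarrow> 0) at_top)"

definition pred_sup :: "(nat \<Rightarrow> real \<Rightarrow> real^4) \<Rightarrow> nat \<Rightarrow> real \<Rightarrow> real" where
  "pred_sup \<chi>s i t =
     (if i = 0 then 0 else Max ((\<lambda>j. Sup ((\<lambda>\<tau>. norm (\<chi>s j \<tau>)) ` {0..t})) ` {..<i}))"

definition vp_gain_bound :: "real \<Rightarrow> real \<Rightarrow> real \<Rightarrow> real \<Rightarrow> real \<Rightarrow> real \<Rightarrow> real \<Rightarrow> real
    \<Rightarrow> (real \<Rightarrow> real \<Rightarrow> real) \<Rightarrow> real \<Rightarrow> bool" where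
  "vp_gain_bound Kp Kv l1 l2 \<gamma>p \<gamma>v a b \<beta> g \<longleftrightarrow>
     (\<forall>N \<chi>s. vp_sol Kp Kv l1 l2 \<gamma>p \<gamma>v a b N \<chi>s \<longrightarrow>
        (\<forall>i\<le>N. \<forall>t\<ge>0. norm (\<chi>s i t) \<le> \<beta> (norm (\<chi>s i 0)) t + g * pred_sup \<chi>s i t))"

definition string_stable :: "real \<Rightarrow> real \<Rightarrow> real \<Rightarrow> real \<Rightarrow> real \<Rightarrow> real \<Rightarrow> real \<Rightarrow> real \<Rightarrow> bool" where
  "string_stable Kp Kv l1 l2 \<gamma>p \<gamma>v a b \<longleftrightarrow>
     (\<forall>\<epsilon>>0. \<exists>\<delta>>0. \<forall>N \<chi>s. vp_sol Kp Kv l1 l2 \<gamma>p \<gamma>v a b N \<chi>s \<longrightarrow>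
        (\<forall>i\<le>N. norm (\<chi>s i 0) < \<delta>) \<longrightarrow> (\<forall>t\<ge>0. \<forall>i\<le>N. norm (\<chi>s i t) < \<epsilon>))"

definition asym_string_stable :: "real \<Rightarrow> real \<Rightarrow> real \<Rightarrow> real \<Rightarrow> real \<Rightarrow> real \<Rightarrow> real \<Rightarrow> real \<Rightarrow> bool" where
  "asym_string_stable Kp Kv l1 l2 \<gamma>p \<gamma>v a b \<longleftrightarrow>
     string_stable Kp Kv l1 l2 \<gamma>p \<gamma>v a b \<and>
     (\<forall>N \<chi>s. vp_sol Kp Kv l1 l2 \<gamma>p \<gamma>v a b N \<chi>s \<longrightarrow>
        (\<forall>i\<le>N. ((\<lambda>t. norm (\<chi>s i t)) \<longlongrightarrow> 0) at_top))"

end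

theory Submission
  imports Defs
begin

text \<open>In the coordinates e = x1 + x3, z = x2 - l1 x3 + x4 + Kp e, p = x3, q = x4 each subsystem
  splits into the autonomous Hurwitz block e' = z - Kp e, z' = -e - Kv z and the filter
  p' = -l1 p + q, q' = -l2 q + g, so a weighted sum of squares is an ISS Lyapunov function:
  every vehicle's state decays exponentially up to a gain times a bound on its input g_i.
  Since |psi| is at most twice gamma times the largest state of the preceding vehicles, each
  vehicle obeys an estimate with gain proportional to a gamma_p + b gamma_v against the past
  supremum of its predecessors, so the gain is below 1 for small a, b. A gain below 1 gives, by
  induction along the string, the uniform bound beta(R,0) / (1 - g) (string stability), and
  convergence of every vehicle once its predecessors have converged (applying the estimate to
  the time-shifted solution).\<close>

lemma has_real_derivative_norm_power2:
  fixes y :: "real \<Rightarrow> 'a::real_inner"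
  assumes "(y has_vector_derivative v) (at t within S)"
  shows "((\<lambda>\<tau>. (norm (y \<tau>))\<^sup>2) has_real_derivative 2 * (y t \<bullet> v)) (at t within S)"
proof -
  note y' = assms[unfolded has_vector_derivative_def]
  have "((\<lambda>\<tau>. y \<tau> \<bullet> y \<tau>) has_derivative (\<lambda>h. y t \<bullet> (h *\<^sub>R v) + (h *\<^sub>R v) \<bullet> y t)) (at t within S)"
    using has_derivative_inner[OF y' y'] .
  then show ?thesis
    unfolding has_field_derivative_def power2_norm_eq_inner
    by (rule has_derivative_eq_rhs) (simp add: fun_eq_iff inner_commute algebra_simps)
qed

lemma linear_differential_inequality:
  fixes V V' :: "real \<Rightarrow> real"
  assumes "c > 0" "K \<ge> 0" "t \<ge> 0"
    and V': "\<And>\<tau>. 0 \<le> \<tau> \<Longrightarrow> \<tau> \<le> t \<Longrightarrow> (V has_real_derivative V' \<tau>) (at \<tau> within {0..})"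
    and le: "\<And>\<tau>. 0 \<le> \<tau> \<Longrightarrow> \<tau> \<le> t \<Longrightarrow> V' \<tau> \<le> - c * V \<tau> + K"
  shows "V t \<le> exp (- c * t) * V 0 + K / c"
proof -
  define W where "W \<tau> = exp (c * \<tau>) * (V \<tau> - K / c)" for \<tau>
  define W' where "W' \<tau> = exp (c * \<tau>) * (c * (V \<tau> - K / c) + V' \<tau>)" for \<tau>
  have W': "(W has_real_derivative W' \<tau>) (at \<tau> within {0..})" if "0 \<le> \<tau>" "\<tau> \<le> t" for \<tau>
    unfolding W_def W'_def by (rule derivative_eq_intros V' that refl)+ (simp add: algebra_simps)
  have W_cont: "continuous_on {0..t} W"
    unfolding continuous_on_eq_continuous_within using W'
    by (metis DERIV_continuous atLeastAtMost_iff atLeast_iff continuous_within_subset subsetI)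
  have "W t \<le> W 0"
  proof (rule DERIV_nonpos_imp_decreasing_open[OF \<open>t \<ge> 0\<close> _ W_cont])
    fix \<tau> assume \<tau>: "0 < \<tau>" "\<tau> < t"
    have "at \<tau> within {0..} = at \<tau>"
      using \<tau> by (intro at_within_interior) simp
    then have "DERIV W \<tau> :> W' \<tau>"
      using W'[of \<tau>] \<tau> by simp
    moreover have "W' \<tau> \<le> 0"
    proof -
      have "c * (V \<tau> - K / c) + V' \<tau> \<le> 0"
        using le[of \<tau>] \<tau> \<open>c > 0\<close> by (simp add: algebra_simps)
      then show ?thesis
        by (simp add: W'_def mult_nonneg_nonpos)
    qed
    ultimately show "\<exists>y. DERIV W \<tau> :> y \<and> y \<le> 0" by blast
  qed
  then have "V t - K / c \<le> exp (- c * t) * (V 0 - K / c)"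
    by (simp add: W_def exp_minus field_simps)
  moreover have "exp (- c * t) * (K / c) \<ge> 0"
    using assms by simp
  ultimately show ?thesis
    by (simp add: algebra_simps)
qed

lemma norm_bound_of_dissipation:
  fixes y :: "real \<Rightarrow> 'a::real_inner"
  assumes "c > 0" "K \<ge> 0" "t \<ge> 0"
    and "\<And>\<tau>. 0 \<le> \<tau> \<Longrightarrow> \<tau> \<le> t \<Longrightarrow> (y has_vector_derivative y' \<tau>) (at \<tau> within {0..})"
    and "\<And>\<tau>. 0 \<le> \<tau> \<Longrightarrow> \<tau> \<le> t \<Longrightarrow> 2 * (y \<tau> \<bullet> y' \<tau>) \<le> - c * (norm (y \<tau>))\<^sup>2 + K"
  shows "norm (y t) \<le> exp (- (c / 2) * t) * norm (y 0) + sqrt (K / c)"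
proof -
  have "(norm (y t))\<^sup>2 \<le> exp (- c * t) * (norm (y 0))\<^sup>2 + K / c"
    using assms
    by (intro linear_differential_inequality[where V' = "\<lambda>\<tau>. 2 * (y \<tau> \<bullet> y' \<tau>)"]
        has_real_derivative_norm_power2) auto
  then have "norm (y t) \<le> sqrt (exp (- c * t) * (norm (y 0))\<^sup>2 + K / c)"
    by (simp add: real_le_rsqrt)
  also have "\<dots> \<le> sqrt (exp (- c * t) * (norm (y 0))\<^sup>2) + sqrt (K / c)"
    using assms by (intro sqrt_add_le_add_sqrt) auto
  also have "exp (- c * t) = (exp (- (c / 2) * t))\<^sup>2"
    by (simp add: power2_eq_square flip: exp_add)
  also have "sqrt ((exp (- (c / 2) * t))\<^sup>2 * (norm (y 0))\<^sup>2) = exp (- (c / 2) * t) * norm (y 0)"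
    by (simp add: real_sqrt_mult)
  finally show ?thesis .
qed

lemma classKL_exp:
  assumes "M > 0" "c > 0"
  shows "classKL (\<lambda>r t. M * r * exp (- c * t))"
  unfolding classKL_def classK_def
proof (intro conjI allI impI)
  fix t :: real
  show "continuous_on {0..} (\<lambda>r. M * r * exp (- c * t))"
    by (intro continuous_intros)
  show "strict_mono_on {0..} (\<lambda>r. M * r * exp (- c * t))"
    using assms by (auto simp: strict_mono_on_def)
  show "M * 0 * exp (- c * t) = 0"
    by simp
next
  fix r :: real assume "r \<ge> 0"
  then show "antimono_on {0..} (\<lambda>t. M * r * exp (- c * t))"
    using assms by (auto simp: monotone_on_def intro!: mult_left_mono)
  show "((\<lambda>t. M * r * exp (- c * t)) \<longlongrightarrow> 0) at_top"
    using assms by (intro tendsto_mult_right_zero filterlim_compose[OF exp_at_bot]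
        filterlim_tendsto_neg_mult_at_bot tendsto_const filterlim_ident) auto
qed

lemma classKL_mono:
  assumes "classKL \<beta>" "0 \<le> r" "r \<le> r'" "0 \<le> t"
  shows "\<beta> r t \<le> \<beta> r' t"
proof -
  have "strict_mono_on {0..} (\<lambda>r. \<beta> r t)"
    using assms unfolding classKL_def classK_def by blast
  then have "(\<lambda>r. \<beta> r t) r \<le> (\<lambda>r. \<beta> r t) r'"
    by (rule strict_mono_on_leD) (use assms in auto)
  then show ?thesis
    by simp
qed

lemma classKL_antimono:
  assumes "classKL \<beta>" "0 \<le> r" "0 \<le> s" "s \<le> t"
  shows "\<beta> r t \<le> \<beta> r s"
proof -
  have "antimono_on {0..} (\<beta> r)"
    using assms unfolding classKL_def by blast
  then show ?thesis
    by (rule monotone_onD) (use assms in auto)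
qed

lemma classKL_nonneg:
  assumes "classKL \<beta>" "0 \<le> r" "0 \<le> t"
  shows "0 \<le> \<beta> r t"
proof -
  have "\<beta> 0 t = 0"
    using assms unfolding classKL_def classK_def by blast
  then show ?thesis
    using classKL_mono[OF assms(1) order_refl assms(2,3)] by simp
qed

lemma abs_psi_le:
  fixes f :: "nat \<Rightarrow> real"
  assumes "\<gamma> \<ge> 0" and f: "\<And>j. j \<le> m \<Longrightarrow> \<bar>f j\<bar> \<le> B"
  shows "\<bar>psi \<gamma> f m\<bar> \<le> 2 * \<gamma> * B"
proof -
  have B: "B \<ge> 0"
    using f[of 0] by linarith
  have "\<bar>\<Sum>j\<le>m. f j\<bar> \<le> (\<Sum>j\<le>m. B)"
    using f by (intro order_trans[OF sum_abs sum_mono]) auto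
  then have mean: "\<bar>smean f m\<bar> \<le> B"
    by (simp add: smean_def divide_le_eq mult.commute)
  have "(f j - smean f m)\<^sup>2 \<le> (2 * B)\<^sup>2" if "j \<le> m" for j
    using f[OF that] mean B by (subst abs_le_square_iff[symmetric]) simp
  then have "(\<Sum>j\<le>m. (f j - smean f m)\<^sup>2) \<le> (\<Sum>j\<le>m. (2 * B)\<^sup>2)"
    by (intro sum_mono) auto
  then have "pvar f m \<le> (2 * B)\<^sup>2"
    by (simp add: pvar_def divide_le_eq mult.commute)
  then have "sqrt (pvar f m) \<le> 2 * B"
    using B by (intro real_le_lsqrt) auto
  moreover have pvar: "pvar f m \<ge> 0"
    by (simp add: pvar_def sum_nonneg)
  moreover have "\<bar>sgn (smean f m)\<bar> \<le> 1"
    by (simp add: abs_sgn_eq)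
  ultimately have "\<bar>sgn (smean f m)\<bar> * sqrt (pvar f m) \<le> 1 * (2 * B)"
    by (intro mult_mono) auto
  then have "\<gamma> * (\<bar>sgn (smean f m)\<bar> * sqrt (pvar f m)) \<le> \<gamma> * (1 * (2 * B))"
    using \<open>\<gamma> \<ge> 0\<close> by (rule mult_left_mono)
  moreover have "\<bar>psi \<gamma> f m\<bar> = \<gamma> * (\<bar>sgn (smean f m)\<bar> * sqrt (pvar f m))"
    using \<open>\<gamma> \<ge> 0\<close> pvar by (simp add: psi_def abs_mult)
  ultimately show ?thesis
    by simp
qed

lemma norm_le_pred_sup:
  assumes cont: "\<And>j. j < i \<Longrightarrow> continuous_on {0..t} (\<chi>s j)"
    and "j < i" "0 \<le> \<tau>" "\<tau> \<le> t"
  shows "norm (\<chi>s j \<tau>) \<le> pred_sup \<chi>s i t"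
proof -
  have "compact ((\<lambda>\<tau>. norm (\<chi>s j \<tau>)) ` {0..t})"
    using cont[OF \<open>j < i\<close>] by (intro compact_continuous_image continuous_on_norm) auto
  then have "norm (\<chi>s j \<tau>) \<le> Sup ((\<lambda>\<tau>. norm (\<chi>s j \<tau>)) ` {0..t})"
    using assms by (intro cSup_upper bounded_imp_bdd_above compact_imp_bounded) auto
  also have "\<dots> \<le> pred_sup \<chi>s i t"
    using assms by (simp add: pred_sup_def)
  finally show ?thesis .
qed

lemma pred_sup_nonneg:
  assumes "\<And>j. j < i \<Longrightarrow> continuous_on {0..t} (\<chi>s j)" "0 \<le> t"
  shows "0 \<le> pred_sup \<chi>s i t"
proof (cases "i = 0")
  case False
  then have "norm (\<chi>s 0 0) \<le> pred_sup \<chi>s i t"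
    using assms by (intro norm_le_pred_sup) auto
  then show ?thesis
    using norm_ge_zero order_trans by blast
qed (simp add: pred_sup_def)

lemma pred_sup_le:
  assumes "0 \<le> t" "0 \<le> C" "\<And>j \<tau>. j < i \<Longrightarrow> 0 \<le> \<tau> \<Longrightarrow> \<tau> \<le> t \<Longrightarrow> norm (\<chi>s j \<tau>) \<le> C"
  shows "pred_sup \<chi>s i t \<le> C"
proof (cases "i = 0")
  case False
  have "Sup ((\<lambda>\<tau>. norm (\<chi>s j \<tau>)) ` {0..t}) \<le> C" if "j < i" for j
    using assms that by (intro cSup_least) auto
  with False show ?thesis
    unfolding pred_sup_def by (simp only: if_False) (subst Max_le_iff; auto)
qed (simp add: pred_sup_def assms)

definition vp_coords :: "real \<Rightarrow> real \<Rightarrow> real \<Rightarrow> real^4 \<Rightarrow> real^4" where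
  "vp_coords Kp l1 w s = (\<chi> k.
     if k = 1 then x1 s + x3 s
     else if k = 2 then x2 s - l1 * x3 s + x4 s + Kp * (x1 s + x3 s)
     else if k = 3 then x3 s
     else w * x4 s)"

lemma vp_coords_nth:
  "vp_coords Kp l1 w s $ 1 = s$1 + s$3"
  "vp_coords Kp l1 w s $ 2 = s$2 - l1 * s$3 + s$4 + Kp * (s$1 + s$3)"
  "vp_coords Kp l1 w s $ 3 = s$3"
  "vp_coords Kp l1 w s $ 4 = w * s$4"
  by (simp_all add: vp_coords_def x1_def x2_def x3_def x4_def)

lemma vp_field_nth:
  "vp_field Kp Kv l1 l2 s g $ 1 = s$2"
  "vp_field Kp Kv l1 l2 s g $ 2 = - (s$1 + s$3) - Kv * (s$2 - l1 * s$3 + s$4 + Kp * (s$1 + s$3))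
       + (Kp - l1) * (l1 * s$3 - s$4) + l2 * s$4 - Kp * s$2 - g"
  "vp_field Kp Kv l1 l2 s g $ 3 = - l1 * s$3 + s$4"
  "vp_field Kp Kv l1 l2 s g $ 4 = - l2 * s$4 + g"
  by (simp_all add: vp_field_def x1_def x2_def x3_def x4_def)

lemma linear_vp_coords: "linear (vp_coords Kp l1 w)"
  by (rule linearI) (simp_all add: vec_eq_iff forall_4 vp_coords_nth algebra_simps)

lemma inj_vp_coords:
  assumes "w \<noteq> 0"
  shows "inj (vp_coords Kp l1 w)"
  unfolding linear_inj_iff_eq_0[OF linear_vp_coords]
  using assms by (auto simp: vec_eq_iff forall_4 vp_coords_nth)

definition vp_cascade :: "real \<Rightarrow> real \<Rightarrow> real \<Rightarrow> real \<Rightarrow> real \<Rightarrow> real^4 \<Rightarrow> real \<Rightarrow> real^4" where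
  "vp_cascade Kp Kv l1 l2 w y g = (\<chi> k.
     if k = 1 then y$2 - Kp * y$1
     else if k = 2 then - y$1 - Kv * y$2
     else if k = 3 then - l1 * y$3 + y$4 / w
     else - l2 * y$4 + w * g)"

lemma vp_coords_field:
  assumes "w \<noteq> 0"
  shows "vp_coords Kp l1 w (vp_field Kp Kv l1 l2 s g) = vp_cascade Kp Kv l1 l2 w (vp_coords Kp l1 w s) g"
  using assms by (simp add: vec_eq_iff forall_4 vp_coords_nth vp_field_nth vp_cascade_def algebra_simps)

definition vp_rate :: "real \<Rightarrow> real \<Rightarrow> real \<Rightarrow> real \<Rightarrow> real" where
  "vp_rate Kp Kv l1 l2 = min (min (2 * Kp) (2 * Kv)) (min l1 (l2 / 2))"

lemma vp_rate_pos: "Kp > 0 \<Longrightarrow> Kv > 0 \<Longrightarrow> l1 > 0 \<Longrightarrow> l2 > 0 \<Longrightarrow> vp_rate Kp Kv l1 l2 > 0"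
  by (simp add: vp_rate_def)

lemma vp_cascade_dissipation:
  assumes "Kp > 0" "Kv > 0" "l1 > 0" "l2 > 0" "w > 0" "2 \<le> l1 * l2 * w\<^sup>2"
  shows "2 * (y \<bullet> vp_cascade Kp Kv l1 l2 w y g)
    \<le> - vp_rate Kp Kv l1 l2 * (norm y)\<^sup>2 + w\<^sup>2 / l2 * g\<^sup>2"
proof -
  define c where "c = vp_rate Kp Kv l1 l2"
  have c: "c \<le> 2 * Kp" "c \<le> 2 * Kv" "c \<le> l1" "c \<le> l2 / 2"
    by (simp_all add: c_def vp_rate_def)
  have "2 * (y$3 * y$4 / w) \<le> l1 * (y$3)\<^sup>2 + (y$4)\<^sup>2 / (l1 * w\<^sup>2)"
    using sum_squares_bound[of "l1 * w * y$3" "y$4"] assms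
    by (simp add: field_simps power2_eq_square)
  also have "(y$4)\<^sup>2 / (l1 * w\<^sup>2) \<le> l2 / 2 * (y$4)\<^sup>2"
    using assms mult_right_mono[OF assms(6), of "(y$4)\<^sup>2"] by (simp add: field_simps)
  finally have cross: "2 * (y$3 * y$4 / w) \<le> l1 * (y$3)\<^sup>2 + l2 / 2 * (y$4)\<^sup>2" by simp
  have input: "2 * (w * y$4 * g) \<le> l2 * (y$4)\<^sup>2 + w\<^sup>2 / l2 * g\<^sup>2"
    using sum_squares_bound[of "l2 * y$4" "w * g"] assms
    by (simp add: field_simps power2_eq_square)
  have "2 * (y \<bullet> vp_cascade Kp Kv l1 l2 w y g) = - 2 * Kp * (y$1)\<^sup>2 - 2 * Kv * (y$2)\<^sup>2
      - 2 * l1 * (y$3)\<^sup>2 + 2 * (y$3 * y$4 / w) - 2 * l2 * (y$4)\<^sup>2 + 2 * (w * y$4 * g)"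
    by (simp add: inner_vec_def sum_4 vp_cascade_def power2_eq_square algebra_simps)
  also have "\<dots> \<le> - c * ((y$1)\<^sup>2 + (y$2)\<^sup>2 + (y$3)\<^sup>2 + (y$4)\<^sup>2) + w\<^sup>2 / l2 * g\<^sup>2"
    using cross input mult_right_mono[OF c(1), of "(y$1)\<^sup>2"] mult_right_mono[OF c(2), of "(y$2)\<^sup>2"]
      mult_right_mono[OF c(3), of "(y$3)\<^sup>2"] mult_right_mono[OF c(4), of "(y$4)\<^sup>2"]
    by (simp add: algebra_simps)
  also have "(y$1)\<^sup>2 + (y$2)\<^sup>2 + (y$3)\<^sup>2 + (y$4)\<^sup>2 = (norm y)\<^sup>2"
    unfolding power2_norm_eq_inner by (simp add: inner_vec_def sum_4 power2_eq_square)
  finally show ?thesis by (simp add: c_def)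
qed

definition vp_forced_sol :: "real \<Rightarrow> real \<Rightarrow> real \<Rightarrow> real \<Rightarrow> (real \<Rightarrow> real) \<Rightarrow> (real \<Rightarrow> real^4) \<Rightarrow> bool" where
  "vp_forced_sol Kp Kv l1 l2 u x \<longleftrightarrow>
     (\<forall>t\<ge>0. (x has_vector_derivative vp_field Kp Kv l1 l2 (x t) (u t)) (at t within {0..}))"

lemma vp_coords_decay:
  assumes pos: "Kp > 0" "Kv > 0" "l1 > 0" "l2 > 0" and w: "w > 0" "2 \<le> l1 * l2 * w\<^sup>2"
    and x: "vp_forced_sol Kp Kv l1 l2 u x" and "0 \<le> t"
    and S: "\<And>\<tau>. 0 \<le> \<tau> \<Longrightarrow> \<tau> \<le> t \<Longrightarrow> \<bar>u \<tau>\<bar> \<le> S"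
  shows "norm (vp_coords Kp l1 w (x t))
    \<le> exp (- (vp_rate Kp Kv l1 l2 / 2) * t) * norm (vp_coords Kp l1 w (x 0))
      + sqrt (w\<^sup>2 / l2 / vp_rate Kp Kv l1 l2) * S"
proof -
  define T where "T = vp_coords Kp l1 w"
  define c where "c = vp_rate Kp Kv l1 l2"
  have "c > 0"
    using pos by (simp add: c_def vp_rate_pos)
  have "S \<ge> 0"
    using S[of 0] \<open>0 \<le> t\<close> by linarith
  have "bounded_linear T"
    using linear_vp_coords linear_linear unfolding T_def by blast
  then have T': "((\<lambda>\<tau>. T (x \<tau>)) has_vector_derivative T (vp_field Kp Kv l1 l2 (x \<tau>) (u \<tau>))) (at \<tau> within {0..})"
    if "0 \<le> \<tau>" for \<tau>
    using bounded_linear.has_vector_derivative x that unfolding vp_forced_sol_def by blast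
  have "2 * (T (x \<tau>) \<bullet> T (vp_field Kp Kv l1 l2 (x \<tau>) (u \<tau>)))
      \<le> - c * (norm (T (x \<tau>)))\<^sup>2 + w\<^sup>2 / l2 * S\<^sup>2" if "0 \<le> \<tau>" "\<tau> \<le> t" for \<tau>
  proof -
    have "w\<^sup>2 / l2 * (u \<tau>)\<^sup>2 \<le> w\<^sup>2 / l2 * S\<^sup>2"
      using power_mono[OF S[OF that], of 2] pos by (intro mult_left_mono) auto
    then show ?thesis
      using vp_cascade_dissipation[OF pos w, of "T (x \<tau>)" "u \<tau>"] w
      unfolding T_def c_def vp_coords_field[OF less_imp_neq[OF w(1), symmetric]] by linarith
  qed
  then have "norm (T (x t)) \<le> exp (- (c / 2) * t) * norm (T (x 0)) + sqrt (w\<^sup>2 / l2 * S\<^sup>2 / c)"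
    using \<open>c > 0\<close> \<open>0 \<le> t\<close> T' pos by (intro norm_bound_of_dissipation) auto
  also have "sqrt (w\<^sup>2 / l2 * S\<^sup>2 / c) = sqrt (w\<^sup>2 / l2 / c * S\<^sup>2)"
    by (rule arg_cong[where f = sqrt]) simp
  also have "\<dots> = sqrt (w\<^sup>2 / l2 / c) * S"
    unfolding real_sqrt_mult using \<open>S \<ge> 0\<close> by simp
  finally show ?thesis
    by (simp add: T_def c_def)
qed

lemma vp_forced_ISS:
  assumes "Kp > 0" "Kv > 0" "l1 > 0" "l2 > 0"
  obtains M c L where "M > 0" "c > 0" "L > 0"
    "\<And>u x t S. vp_forced_sol Kp Kv l1 l2 u x \<Longrightarrow> 0 \<le> t \<Longrightarrow>
       (\<And>\<tau>. 0 \<le> \<tau> \<Longrightarrow> \<tau> \<le> t \<Longrightarrow> \<bar>u \<tau>\<bar> \<le> S) \<Longrightarrow>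
       norm (x t) \<le> M * norm (x 0) * exp (- c * t) + L * S"
proof -
  define w where "w = sqrt (2 / (l1 * l2))"
  define T where "T = vp_coords Kp l1 w"
  define c where "c = vp_rate Kp Kv l1 l2"
  have w: "w > 0" "2 \<le> l1 * l2 * w\<^sup>2"
    using assms by (simp_all add: w_def)
  have "c > 0"
    using assms by (simp add: c_def vp_rate_pos)
  have T_lin: "linear T" and T_inj: "inj T"
    using linear_vp_coords inj_vp_coords w(1) by (simp_all add: T_def)
  obtain B where B: "B > 0" "\<And>s. norm (T s) \<le> B * norm s"
    using linear_bounded_pos[OF T_lin] by blast
  obtain b where b: "b > 0" "\<And>s. b * norm s \<le> norm (T s)"
    using linear_inj_bounded_below_pos[OF T_lin T_inj] by blast
  define K where "K = sqrt (w\<^sup>2 / l2 / c)"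
  show thesis
  proof (rule that[of "B / b" "c / 2" "K / b"])
    show "B / b > 0" "c / 2 > 0" "K / b > 0"
      using B b \<open>c > 0\<close> w assms by (simp_all add: K_def)
    fix u x t S
    assume "vp_forced_sol Kp Kv l1 l2 u x" "0 \<le> t" "\<And>\<tau>. 0 \<le> \<tau> \<Longrightarrow> \<tau> \<le> t \<Longrightarrow> \<bar>u \<tau>\<bar> \<le> S"
    then have "b * norm (x t) \<le> exp (- (c / 2) * t) * norm (T (x 0)) + K * S"
      using vp_coords_decay[OF assms w] b(2)[of "x t"] unfolding T_def c_def K_def by fastforce
    also have "\<dots> \<le> exp (- (c / 2) * t) * (B * norm (x 0)) + K * S"
      using B(2) by (intro add_right_mono mult_left_mono) auto
    also have "\<dots> = b * (B / b * norm (x 0) * exp (- (c / 2) * t) + K / b * S)"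
      using b(1) by (simp add: algebra_simps)
    finally show "norm (x t) \<le> B / b * norm (x 0) * exp (- (c / 2) * t) + K / b * S"
      using b(1) by (rule mult_left_le_imp_le)
  qed
qed

lemma vp_iso_GES:
  assumes "Kp > 0" "Kv > 0" "l1 > 0" "l2 > 0"
  shows "iso_GES Kp Kv l1 l2"
proof -
  obtain M c L where "M > 0" "c > 0" "L > 0" and ISS:
    "\<And>u x t S. vp_forced_sol Kp Kv l1 l2 u x \<Longrightarrow> 0 \<le> t \<Longrightarrow>
       (\<And>\<tau>. 0 \<le> \<tau> \<Longrightarrow> \<tau> \<le> t \<Longrightarrow> \<bar>u \<tau>\<bar> \<le> S) \<Longrightarrow>
       norm (x t) \<le> M * norm (x 0) * exp (- c * t) + L * S"
    using vp_forced_ISS[OF assms] by blast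
  have "norm (x t) \<le> M * norm (x 0) * exp (- c * t)" if "iso_sol Kp Kv l1 l2 x" "0 \<le> t" for x t
    using ISS[of "\<lambda>_. 0" x t 0] that by (simp add: iso_sol_def vp_forced_sol_def)
  then show ?thesis
    unfolding iso_GES_def using \<open>M > 0\<close> \<open>c > 0\<close> by blast
qed

lemma vp_sol_forced:
  assumes "vp_sol Kp Kv l1 l2 \<gamma>p \<gamma>v a b N \<chi>s" "i \<le> N"
  shows "vp_forced_sol Kp Kv l1 l2 (gin a b \<gamma>p \<gamma>v \<chi>s i) (\<chi>s i)"
  using assms by (simp add: vp_sol_def vp_forced_sol_def)

lemma vp_sol_continuous_on:
  assumes "vp_sol Kp Kv l1 l2 \<gamma>p \<gamma>v a b N \<chi>s" "i \<le> N"
  shows "continuous_on {0..t} (\<chi>s i)"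
proof -
  have "continuous_on {0..} (\<chi>s i)"
    using assms unfolding vp_sol_def by (intro continuous_on_vector_derivative) auto
  then show ?thesis
    by (rule continuous_on_subset) auto
qed

lemma abs_gin_le:
  assumes sol: "vp_sol Kp Kv l1 l2 \<gamma>p \<gamma>v a b N \<chi>s" and "i \<le> N" "0 \<le> \<tau>" "\<tau> \<le> t"
    and "a \<ge> 0" "b \<ge> 0" "\<gamma>p \<ge> 0" "\<gamma>v \<ge> 0"
  shows "\<bar>gin a b \<gamma>p \<gamma>v \<chi>s i \<tau>\<bar> \<le> 2 * (a * \<gamma>p + b * \<gamma>v) * pred_sup \<chi>s i t"
proof (cases "i = 0")
  case False
  let ?B = "pred_sup \<chi>s i t"
  let ?\<psi>p = "psi \<gamma>p (\<lambda>j. x1 (\<chi>s j \<tau>)) (i - 1)" and ?\<psi>v = "psi \<gamma>v (\<lambda>j. x2 (\<chi>s j \<tau>)) (i - 1)"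
  have "\<bar>\<chi>s j \<tau> $ k\<bar> \<le> ?B" if "j \<le> i - 1" for j k
  proof -
    have "norm (\<chi>s j \<tau>) \<le> ?B"
      using assms False that by (intro norm_le_pred_sup vp_sol_continuous_on[OF sol]) auto
    then show ?thesis
      using component_le_norm_cart order_trans by blast
  qed
  then have "\<bar>?\<psi>p\<bar> \<le> 2 * \<gamma>p * ?B" "\<bar>?\<psi>v\<bar> \<le> 2 * \<gamma>v * ?B"
    using assms by (simp_all add: abs_psi_le x1_def x2_def)
  then have "a * \<bar>?\<psi>p\<bar> + b * \<bar>?\<psi>v\<bar> \<le> a * (2 * \<gamma>p * ?B) + b * (2 * \<gamma>v * ?B)"
    using assms by (intro add_mono mult_left_mono) auto
  moreover have "\<bar>gin a b \<gamma>p \<gamma>v \<chi>s i \<tau>\<bar> \<le> a * \<bar>?\<psi>p\<bar> + b * \<bar>?\<psi>v\<bar>"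
    using False assms abs_triangle_ineq[of "a * ?\<psi>p" "b * ?\<psi>v"] by (simp add: gin_def abs_mult)
  ultimately show ?thesis
    by (simp add: algebra_simps)
qed (simp add: gin_def pred_sup_def)

lemma vp_gain_bound_of_ISS:
  assumes "a \<ge> 0" "b \<ge> 0" "\<gamma>p \<ge> 0" "\<gamma>v \<ge> 0" "L \<ge> 0"
    and ISS: "\<And>u x t S. vp_forced_sol Kp Kv l1 l2 u x \<Longrightarrow> 0 \<le> t \<Longrightarrow>
       (\<And>\<tau>. 0 \<le> \<tau> \<Longrightarrow> \<tau> \<le> t \<Longrightarrow> \<bar>u \<tau>\<bar> \<le> S) \<Longrightarrow>
       norm (x t) \<le> M * norm (x 0) * exp (- c * t) + L * S"
    and g: "2 * (a * \<gamma>p + b * \<gamma>v) * L \<le> g"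
  shows "vp_gain_bound Kp Kv l1 l2 \<gamma>p \<gamma>v a b (\<lambda>r t. M * r * exp (- c * t)) g"
  unfolding vp_gain_bound_def
proof (intro allI impI)
  fix N \<chi>s i and t :: real
  assume sol: "vp_sol Kp Kv l1 l2 \<gamma>p \<gamma>v a b N \<chi>s" and "i \<le> N" "0 \<le> t"
  let ?P = "pred_sup \<chi>s i t"
  have "norm (\<chi>s i t) \<le> M * norm (\<chi>s i 0) * exp (- c * t) + L * (2 * (a * \<gamma>p + b * \<gamma>v) * ?P)"
    by (rule ISS[OF vp_sol_forced[OF sol \<open>i \<le> N\<close>] \<open>0 \<le> t\<close>], rule abs_gin_le[OF sol \<open>i \<le> N\<close>])
      (use assms in auto)
  also have "L * (2 * (a * \<gamma>p + b * \<gamma>v) * ?P) = 2 * (a * \<gamma>p + b * \<gamma>v) * L * ?P"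
    by (simp only: ac_simps)
  also have "\<dots> \<le> g * ?P"
    using g pred_sup_nonneg[of i t \<chi>s] vp_sol_continuous_on[OF sol] \<open>i \<le> N\<close> \<open>0 \<le> t\<close>
    by (intro mult_right_mono) auto
  finally show "norm (\<chi>s i t) \<le> M * norm (\<chi>s i 0) * exp (- c * t) + g * ?P"
    by simp
qed

lemma vp_gain_bound_linear:
  assumes "Kp > 0" "Kv > 0" "l1 > 0" "l2 > 0"
  obtains \<beta> L where "classKL \<beta>" "L > 0"
    "\<And>a b \<gamma>p \<gamma>v g. a \<ge> 0 \<Longrightarrow> b \<ge> 0 \<Longrightarrow> \<gamma>p \<ge> 0 \<Longrightarrow> \<gamma>v \<ge> 0 \<Longrightarrow> 2 * (a * \<gamma>p + b * \<gamma>v) * L \<le> g \<Longrightarrow>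
       vp_gain_bound Kp Kv l1 l2 \<gamma>p \<gamma>v a b \<beta> g"
proof -
  obtain M c L where "M > 0" "c > 0" "L > 0" and ISS:
    "\<And>u x t S. vp_forced_sol Kp Kv l1 l2 u x \<Longrightarrow> 0 \<le> t \<Longrightarrow>
       (\<And>\<tau>. 0 \<le> \<tau> \<Longrightarrow> \<tau> \<le> t \<Longrightarrow> \<bar>u \<tau>\<bar> \<le> S) \<Longrightarrow>
       norm (x t) \<le> M * norm (x 0) * exp (- c * t) + L * S"
    using vp_forced_ISS[OF assms] by blast
  show thesis
  proof (rule that[OF classKL_exp[OF \<open>M > 0\<close> \<open>c > 0\<close>] \<open>L > 0\<close>])
    show "vp_gain_bound Kp Kv l1 l2 \<gamma>p \<gamma>v a b (\<lambda>r t. M * r * exp (- c * t)) g"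
      if "a \<ge> 0" "b \<ge> 0" "\<gamma>p \<ge> 0" "\<gamma>v \<ge> 0" "2 * (a * \<gamma>p + b * \<gamma>v) * L \<le> g" for a b \<gamma>p \<gamma>v g
      using that \<open>L > 0\<close> by (intro vp_gain_bound_of_ISS[where L = L, OF _ _ _ _ _ ISS]) auto
  qed
qed

lemma vp_sol_shift:
  assumes sol: "vp_sol Kp Kv l1 l2 \<gamma>p \<gamma>v a b N \<chi>s" and "T \<ge> 0"
  shows "vp_sol Kp Kv l1 l2 \<gamma>p \<gamma>v a b N (\<lambda>j t. \<chi>s j (t + T))"
  unfolding vp_sol_def
proof (intro allI impI)
  fix i t assume "i \<le> N" "0 \<le> (t::real)"
  have "(\<chi>s i has_vector_derivative vp_field Kp Kv l1 l2 (\<chi>s i (t + T)) (gin a b \<gamma>p \<gamma>v \<chi>s i (t + T)))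
      (at (t + T) within {0..})"
    using sol \<open>i \<le> N\<close> \<open>0 \<le> t\<close> \<open>T \<ge> 0\<close> unfolding vp_sol_def by simp
  then have "(\<chi>s i has_vector_derivative vp_field Kp Kv l1 l2 (\<chi>s i (t + T)) (gin a b \<gamma>p \<gamma>v \<chi>s i (t + T)))
      (at ((\<lambda>t. t + T) t) within (\<lambda>t. t + T) ` {0..})"
    by (rule has_vector_derivative_within_subset) (use \<open>T \<ge> 0\<close> in auto)
  moreover have "((\<lambda>t. t + T) has_vector_derivative 1) (at t within {0..})"
    by (rule derivative_eq_intros refl)+ simp
  ultimately have "((\<chi>s i \<circ> (\<lambda>t. t + T)) has_vector_derivative
      1 *\<^sub>R vp_field Kp Kv l1 l2 (\<chi>s i (t + T)) (gin a b \<gamma>p \<gamma>v \<chi>s i (t + T))) (at t within {0..})"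
    by (rule vector_diff_chain_within[rotated])
  then show "((\<lambda>t. \<chi>s i (t + T)) has_vector_derivative
      vp_field Kp Kv l1 l2 (\<chi>s i (t + T)) (gin a b \<gamma>p \<gamma>v (\<lambda>j t. \<chi>s j (t + T)) i t)) (at t within {0..})"
    by (simp add: gin_def o_def)
qed

lemma vp_gain_bound_uniform:
  assumes KL: "classKL \<beta>" and g: "0 < g" "g < 1"
    and gain: "vp_gain_bound Kp Kv l1 l2 \<gamma>p \<gamma>v a b \<beta> g"
    and sol: "vp_sol Kp Kv l1 l2 \<gamma>p \<gamma>v a b N \<chi>s"
    and R: "\<And>j. j \<le> N \<Longrightarrow> norm (\<chi>s j 0) \<le> R"
    and "i \<le> N" "0 \<le> t"
  shows "norm (\<chi>s i t) \<le> \<beta> R 0 / (1 - g)"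
  using \<open>i \<le> N\<close> \<open>0 \<le> t\<close>
proof (induction i arbitrary: t rule: less_induct)
  case (less i)
  define C where "C = \<beta> R 0 / (1 - g)"
  have "R \<ge> 0"
    using R[of 0] norm_ge_zero order_trans by blast
  then have "C \<ge> 0"
    using classKL_nonneg[OF KL] g by (simp add: C_def)
  have "norm (\<chi>s i t) \<le> \<beta> (norm (\<chi>s i 0)) t + g * pred_sup \<chi>s i t"
    using gain sol less.prems unfolding vp_gain_bound_def by blast
  also have "\<dots> \<le> \<beta> R 0 + g * C"
  proof (intro add_mono mult_left_mono)
    have "\<beta> (norm (\<chi>s i 0)) t \<le> \<beta> R t"
      using less.prems by (intro classKL_mono[OF KL] R) auto
    also have "\<dots> \<le> \<beta> R 0"
      using less.prems \<open>R \<ge> 0\<close> by (intro classKL_antimono[OF KL]) auto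
    finally show "\<beta> (norm (\<chi>s i 0)) t \<le> \<beta> R 0" .
    show "pred_sup \<chi>s i t \<le> C"
      using less \<open>C \<ge> 0\<close> by (intro pred_sup_le) (auto simp: C_def)
  qed (use g in simp)
  also have "\<beta> R 0 + g * C = C"
    using g by (simp add: C_def field_simps)
  finally show ?case
    by (simp add: C_def)
qed

lemma vp_gain_bound_string_stable:
  assumes KL: "classKL \<beta>" and g: "0 < g" "g < 1"
    and gain: "vp_gain_bound Kp Kv l1 l2 \<gamma>p \<gamma>v a b \<beta> g"
  shows "string_stable Kp Kv l1 l2 \<gamma>p \<gamma>v a b"
  unfolding string_stable_def
proof (intro allI impI)
  fix \<epsilon> :: real assume "\<epsilon> > 0"
  have "continuous_on {0..} (\<lambda>r. \<beta> r 0)" and "\<beta> 0 0 = 0"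
    using KL unfolding classKL_def classK_def by auto
  moreover have "\<epsilon> * (1 - g) > 0"
    using \<open>\<epsilon> > 0\<close> g by simp
  ultimately obtain d where "d > 0" and d: "\<And>r. 0 \<le> r \<Longrightarrow> r < d \<Longrightarrow> \<beta> r 0 < \<epsilon> * (1 - g)"
    unfolding continuous_on_iff by (metis atLeast_iff order_refl dist_real_def diff_0_right abs_of_nonneg
        abs_less_iff)
  show "\<exists>\<delta>>0. \<forall>N \<chi>s. vp_sol Kp Kv l1 l2 \<gamma>p \<gamma>v a b N \<chi>s \<longrightarrow> (\<forall>i\<le>N. norm (\<chi>s i 0) < \<delta>) \<longrightarrow>
      (\<forall>t\<ge>0. \<forall>i\<le>N. norm (\<chi>s i t) < \<epsilon>)"
  proof (intro exI[of _ "d / 2"] conjI allI impI)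
    fix N \<chi>s i and t :: real
    assume sol: "vp_sol Kp Kv l1 l2 \<gamma>p \<gamma>v a b N \<chi>s" and small: "\<forall>i\<le>N. norm (\<chi>s i 0) < d / 2"
      and "0 \<le> t" "i \<le> N"
    have "norm (\<chi>s i t) \<le> \<beta> (d / 2) 0 / (1 - g)"
      using small \<open>0 \<le> t\<close> \<open>i \<le> N\<close> by (intro vp_gain_bound_uniform[OF KL g gain sol]) auto
    also have "\<dots> < \<epsilon>"
      using d[of "d / 2"] \<open>d > 0\<close> g by (simp add: divide_less_eq)
    finally show "norm (\<chi>s i t) < \<epsilon>" .
  qed (use \<open>d > 0\<close> in simp)
qed

lemma vp_gain_bound_shifted:
  assumes KL: "classKL \<beta>"
    and gain: "vp_gain_bound Kp Kv l1 l2 \<gamma>p \<gamma>v a b \<beta> g" "g \<ge> 0"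
    and sol: "vp_sol Kp Kv l1 l2 \<gamma>p \<gamma>v a b N \<chi>s" and "i \<le> N" "0 \<le> T" "0 \<le> s"
    and C: "\<And>t. 0 \<le> t \<Longrightarrow> norm (\<chi>s i t) \<le> C"
    and \<eta>: "0 \<le> \<eta>" "\<And>j t. j < i \<Longrightarrow> T \<le> t \<Longrightarrow> norm (\<chi>s j t) \<le> \<eta>"
  shows "norm (\<chi>s i (s + T)) \<le> \<beta> C s + g * \<eta>"
proof -
  have "norm (\<chi>s i (s + T)) \<le> \<beta> (norm (\<chi>s i (0 + T))) s + g * pred_sup (\<lambda>j t. \<chi>s j (t + T)) i s"
    using gain vp_sol_shift[OF sol \<open>0 \<le> T\<close>] \<open>i \<le> N\<close> \<open>0 \<le> s\<close> unfolding vp_gain_bound_def by blast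
  also have "\<dots> \<le> \<beta> C s + g * \<eta>"
    using assms by (intro add_mono mult_left_mono classKL_mono[OF KL] pred_sup_le) auto
  finally show ?thesis .
qed

lemma vp_gain_bound_tendsto_zero:
  assumes KL: "classKL \<beta>" and g: "0 < g" "g < 1"
    and gain: "vp_gain_bound Kp Kv l1 l2 \<gamma>p \<gamma>v a b \<beta> g"
    and sol: "vp_sol Kp Kv l1 l2 \<gamma>p \<gamma>v a b N \<chi>s" and "i \<le> N"
  shows "((\<lambda>t. norm (\<chi>s i t)) \<longlongrightarrow> 0) at_top"
proof -
  define C where "C = \<beta> (\<Sum>j\<le>N. norm (\<chi>s j 0)) 0 / (1 - g)"
  have bounded: "norm (\<chi>s j t) \<le> C" if "j \<le> N" "0 \<le> t" for j t
    unfolding C_def using that by (intro vp_gain_bound_uniform[OF KL g gain sol] member_le_sum) auto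
  then have "C \<ge> 0"
    using norm_ge_zero order_trans by blast
  then have "(\<beta> C \<longlongrightarrow> 0) at_top"
    using KL unfolding classKL_def by blast
  from \<open>i \<le> N\<close> show ?thesis
  proof (induction i rule: less_induct)
    case (less i)
    show ?case
    proof (rule order_tendstoI)
      fix \<epsilon> :: real assume "0 < \<epsilon>"
      then have "\<forall>\<^sub>F t in at_top. \<forall>j\<in>{..<i}. norm (\<chi>s j t) < \<epsilon> / 2"
        using less by (intro eventually_ball_finite ballI order_tendstoD(2)) auto
      then obtain T0 where T0: "\<And>t j. T0 \<le> t \<Longrightarrow> j < i \<Longrightarrow> norm (\<chi>s j t) < \<epsilon> / 2"
        unfolding eventually_at_top_linorder by auto
      define T where "T = max T0 0"
      have "T \<ge> 0" and T: "\<And>t j. T \<le> t \<Longrightarrow> j < i \<Longrightarrow> norm (\<chi>s j t) \<le> \<epsilon> / 2"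
        using T0 by (auto simp: T_def intro: less_imp_le)
      obtain S where S: "\<And>s. S \<le> s \<Longrightarrow> \<beta> C s < \<epsilon> / 2"
        using order_tendstoD(2)[OF \<open>(\<beta> C \<longlongrightarrow> 0) at_top\<close>, of "\<epsilon> / 2"] \<open>0 < \<epsilon>\<close>
        unfolding eventually_at_top_linorder by auto
      have "norm (\<chi>s i (s + T)) < \<epsilon>" if "max S 0 \<le> s" for s
      proof -
        have "norm (\<chi>s i (s + T)) \<le> \<beta> C s + g * (\<epsilon> / 2)"
          using that less.prems \<open>T \<ge> 0\<close> \<open>0 < \<epsilon>\<close> g
          by (intro vp_gain_bound_shifted[OF KL gain _ sol _ _ _ bounded _ T]) auto
        also have "\<dots> < \<epsilon>"
          using S[of s] that mult_strict_left_mono[OF g(2) \<open>0 < \<epsilon>\<close>] by (simp add: field_simps)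
        finally show ?thesis .
      qed
      then have "norm (\<chi>s i t) < \<epsilon>" if "max S 0 + T \<le> t" for t
        using that by (metis diff_add_cancel le_diff_eq)
      then show "\<forall>\<^sub>F t in at_top. norm (\<chi>s i t) < \<epsilon>"
        unfolding eventually_at_top_linorder by blast
    qed (simp add: order_less_le_trans[OF _ norm_ge_zero])
  qed
qed

lemma vp_gain_bound_asym_string_stable:
  assumes "classKL \<beta>" "0 < g" "g < 1" "vp_gain_bound Kp Kv l1 l2 \<gamma>p \<gamma>v a b \<beta> g"
  shows "asym_string_stable Kp Kv l1 l2 \<gamma>p \<gamma>v a b"
  using vp_gain_bound_string_stable[OF assms] vp_gain_bound_tendsto_zero[OF assms]
  unfolding asym_string_stable_def by blast

theorem theorem3:
  fixes Kp Kv l1 l2 \<gamma>p \<gamma>v a b :: real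
  assumes "Kp > 0" "Kv > 0" "l1 > 0" "l2 > 0" "\<gamma>p > 0" "\<gamma>v > 0"
    and "a \<ge> 0" "b \<ge> 0"
  shows "iso_GES Kp Kv l1 l2 \<and>
    (\<exists>\<beta> g. classKL \<beta> \<and> g > 0 \<and> vp_gain_bound Kp Kv l1 l2 \<gamma>p \<gamma>v a b \<beta> g) \<and>
    (\<exists>a' b'. a' \<ge> 0 \<and> b' \<ge> 0 \<and> (a' \<noteq> 0 \<or> b' \<noteq> 0) \<and>
           (\<exists>\<beta> g. classKL \<beta> \<and> 0 < g \<and> g < 1 \<and> vp_gain_bound Kp Kv l1 l2 \<gamma>p \<gamma>v a' b' \<beta> g)) \<and>
    (\<forall>a' b'. a' \<ge> 0 \<longrightarrow> b' \<ge> 0 \<longrightarrow> (a' \<noteq> 0 \<or> b' \<noteq> 0) \<longrightarrow>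
           (\<exists>\<beta> g. classKL \<beta> \<and> 0 < g \<and> g < 1 \<and> vp_gain_bound Kp Kv l1 l2 \<gamma>p \<gamma>v a' b' \<beta> g) \<longrightarrow>
           asym_string_stable Kp Kv l1 l2 \<gamma>p \<gamma>v a' b')"
proof -
  obtain \<beta> L where KL: "classKL \<beta>" and "L > 0" and gain:
    "\<And>a b g. a \<ge> 0 \<Longrightarrow> b \<ge> 0 \<Longrightarrow> 2 * (a * \<gamma>p + b * \<gamma>v) * L \<le> g \<Longrightarrow>
       vp_gain_bound Kp Kv l1 l2 \<gamma>p \<gamma>v a b \<beta> g"
    using vp_gain_bound_linear[OF assms(1-4)] assms(5,6) by (metis less_imp_le)
  define a' where "a' = 1 / (4 * L * \<gamma>p)"
  have "2 * (a * \<gamma>p + b * \<gamma>v) * L \<ge> 0" "a' \<ge> 0" "a' \<noteq> 0"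
    using assms \<open>L > 0\<close> by (simp_all add: a'_def)
  then have "2 * (a * \<gamma>p + b * \<gamma>v) * L + 1 > 0"
    and "vp_gain_bound Kp Kv l1 l2 \<gamma>p \<gamma>v a b \<beta> (2 * (a * \<gamma>p + b * \<gamma>v) * L + 1)"
    and "vp_gain_bound Kp Kv l1 l2 \<gamma>p \<gamma>v a' 0 \<beta> (1 / 2)"
    using assms \<open>L > 0\<close> by (linarith, auto intro!: gain simp: a'_def)
  moreover have "(0::real) < 1 / 2" "(1 / 2 :: real) < 1"
    by simp_all
  ultimately show ?thesis
    using vp_iso_GES[OF assms(1-4)] KL \<open>a' \<ge> 0\<close> \<open>a' \<noteq> 0\<close> vp_gain_bound_asym_string_stable
    by blast
qed

end
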